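(* Under the assumptions and notation of the theorem below, suppose in addition that \[\min_{\{j:\,\beta_{\star,j}\neq0\}}|\beta_{\star,j}|>\sqrt{\frac{M\sigma_\star^2 s\log p}{n}}.\] Then with probability at least $1-p^{-c_0 s/8}-e^{-s}-p^{-(c_0/2-1)}$, one has $\operatorname{sign}(\tilde\beta_n)=\operatorname{sign}(\beta_\star)$. The assumptions and notation are as follows. Let $Y=X\beta_\star+\epsilon$ with $\epsilon\sim N(0,\sigma_\star^2 I_n)$, where $\sigma_\star^2>0$ is known. Let $X\in\mathbb R^{n\times p}$ have nonzero, pairwise orthogonal columns $x_1,\dots,x_p$. Let $s=|\{j:\beta_{\star,j}\neq0\}|$ with $\log s\ge1$. Fix $c_0>2$ and set $z_\star=c_0\log p$. Let $c=\min_j\|x_j\|^2/n$, $M=4(2+c_0)/c$, and let $\tilde\beta_n$ be the thresholded SBL estimator defined in the context.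
   Context: For $u\in\mathbb R^p$, $\operatorname{sign}(u)=(s_1,\dots,s_p)$ with $s_i=0$ if $u_i=0$, $s_i=1$ if $u_i>0$, and $s_i=-1$ if $u_i<0$. Set $\sigma^2=\sigma_\star^2$. For $\gamma\in[0,\infty)^p$ let $I_\gamma=\{j:\gamma_j\neq0\}$, and define $C_\gamma=\sigma^2 I_n+\sum_{j\in I_\gamma}\gamma_jx_jx_j'$ and $\ell(\sigma^2,\gamma)=-\tfrac12\log\det C_\gamma-\tfrac12\operatorname{Tr}(C_\gamma^{-1}YY')$. Let $\hat\gamma_n$ maximize $\gamma\mapsto\ell(\sigma^2,\gamma)$ on $[0,\infty)^p$. Under orthogonality, $\hat\gamma_{n,j}=(\langle x_j,Y\rangle^2-\sigma^2\|x_j\|^2)/\|x_j\|^4$ if $\langle x_j,Y\rangle^2>\sigma^2\|x_j\|^2$, and $0$ otherwise. Threshold: $\tilde\gamma_{n,j}=\hat\gamma_{n,j}$ if $\hat\gamma_{n,j}>\sigma^2z_\star/\|x_j\|^2$, and $0$ otherwise. Estimator: $\tilde\beta_{n,j}=0$ for $j\notin I_{\tilde\gamma_n}$, and $(\tilde\beta_{n,j})_{j\in I_{\tilde\gamma_n}}=(X_{\tilde\gamma_n}'X_{\tilde\gamma_n}+\sigma^2\bar\Gamma_{\tilde\gamma_n}^{-1})^{-1}X_{\tilde\gamma_n}'Y$. Here $X_\gamma$ collects the columns indexed by $I_\gamma$, and $\bar\Gamma_\gamma=\operatorname{diag}(\gamma_j,j\in I_\gamma)$. *)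

theory Defs
  imports "HOL-Probability.Probability" "Jordan_Normal_Form.Gauss_Jordan_Elimination"
begin

definition ipv :: "real Matrix.vec \<Rightarrow> real Matrix.vec \<Rightarrow> real" where
  "ipv u v = (\<Sum>i<dim_vec u. u $ i * v $ i)"

definition sqnorm :: "real Matrix.vec \<Rightarrow> real" where
  "sqnorm u = ipv u u"

definition sign_vec :: "real Matrix.vec \<Rightarrow> real Matrix.vec" where
  "sign_vec u = map_vec sgn u"

text \<open>Closed form of the SBL maximiser hat gamma_n under orthogonal design.\<close>
definition gamma_hat :: "real \<Rightarrow> real mat \<Rightarrow> real Matrix.vec \<Rightarrow> nat \<Rightarrow> real" where
  "gamma_hat \<sigma>2 X Y j =
     (let a = (ipv (col X j) Y)\<^sup>2; q = sqnorm (col X j) in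
      if a > \<sigma>2 * q then (a - \<sigma>2 * q) / q\<^sup>2 else 0)"

definition gamma_tilde :: "real \<Rightarrow> real \<Rightarrow> real mat \<Rightarrow> real Matrix.vec \<Rightarrow> nat \<Rightarrow> real" where
  "gamma_tilde \<sigma>2 z X Y j =
     (let g = gamma_hat \<sigma>2 X Y j in
      if g > \<sigma>2 * z / sqnorm (col X j) then g else 0)"

definition sbl_estimator :: "real \<Rightarrow> real \<Rightarrow> real mat \<Rightarrow> real Matrix.vec \<Rightarrow> real Matrix.vec" where
  "sbl_estimator \<sigma>2 z X Y =
     (let \<gamma> = gamma_tilde \<sigma>2 z X Y;
          I = {j. j < dim_col X \<and> \<gamma> j \<noteq> 0};
          idx = sorted_list_of_set I;
          k = length idx;
          Xg = mat (dim_row X) k (\<lambda>(i, l). X $$ (i, idx ! l));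
          Gbar = mat k k (\<lambda>(l, m). if l = m then \<gamma> (idx ! l) else 0);
          A = transpose_mat Xg * Xg + \<sigma>2 \<cdot>\<^sub>m the (mat_inverse Gbar);
          b = the (mat_inverse A) *\<^sub>v (transpose_mat Xg *\<^sub>v Y)
      in Matrix.vec (dim_col X) (\<lambda>j. if j \<in> I then b $ card {i \<in> I. i < j} else 0))"

definition noise_measure :: "nat \<Rightarrow> real \<Rightarrow> (nat \<Rightarrow> real) measure" where
  "noise_measure n \<sigma>2 = PiM {..<n} (\<lambda>_. density lborel (normal_density 0 (sqrt \<sigma>2)))"

end

theory Submission
  imports Defs "HOL-Real_Asymp.Real_Asymp"
begin

text \<open>
  Under an orthogonal design everything decouples coordinatewise.  The Gram matrix of the
  selected columns and the prior precision are both diagonal, so the j-th coordinate of the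
  estimator is <x_j, Y> / (|x_j|^2 + sigma^2 / gamma_j), and the thresholded gamma_j is nonzero
  exactly when <x_j, Y>^2 > sigma^2 |x_j|^2 (1 + z).  Now <x_j, Y> = |x_j|^2 beta_j + <x_j, eps>
  with <x_j, eps> ~ N(0, sigma^2 |x_j|^2).  The beta-min condition makes the signal term
  |x_j|^2 beta_j more than twice the threshold sqrt (sigma^2 |x_j|^2 (1 + z)), so every sign is
  recovered as soon as all p noise terms stay below that threshold.  A Gaussian tail bound and a
  union bound over the columns bound the failure probability by p exp (-(1 + z) / 2), which is at
  most p^(1 - c0/2).
\<close>

lemma nth_sorted_list_of_set_card_less:
  fixes I :: "nat set"
  assumes "finite I" and "j \<in> I"
  shows "sorted_list_of_set I ! card {i \<in> I. i < j} = j"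
proof -
  define xs where "xs = sorted_list_of_set I"
  have sorted: "sorted_wrt (<) xs" and set_xs: "set xs = I" and "distinct xs"
    using assms by (simp_all add: xs_def)
  obtain l where l: "l < length xs" "xs ! l = j"
    using assms set_xs by (metis in_set_conv_nth)
  have "{i \<in> I. i < j} = set (take l xs)"
  proof (intro equalityI subsetI)
    fix i assume "i \<in> {i \<in> I. i < j}"
    then obtain m where m: "m < length xs" "xs ! m = i" "i < j"
      using set_xs by (auto simp: in_set_conv_nth)
    then have "m < l"
      using sorted l by (metis leI order.asym sorted_wrt_iff_nth_less le_neq_implies_less)
    then show "i \<in> set (take l xs)"
      using m by (auto simp: in_set_conv_nth)
  next
    fix i assume "i \<in> set (take l xs)"
    then obtain m where "m < l" "xs ! m = i"
      using l by (auto simp: in_set_conv_nth)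
    then show "i \<in> {i \<in> I. i < j}"
      using sorted l set_xs by (auto simp: sorted_wrt_iff_nth_less)
  qed
  then have "card {i \<in> I. i < j} = l"
    using \<open>distinct xs\<close> l by (simp add: distinct_card)
  then show ?thesis
    using l by (simp add: xs_def)
qed

lemma mat_inverse_mat_diag:
  fixes d :: "nat \<Rightarrow> 'a::field"
  assumes "\<And>l. l < k \<Longrightarrow> d l \<noteq> 0"
  shows "mat_inverse (mat_diag k d) = Some (mat_diag k (\<lambda>l. inverse (d l)))"
proof -
  let ?A = "mat_diag k d" and ?B = "mat_diag k (\<lambda>l. inverse (d l))"
  have AB: "?A * ?B = 1\<^sub>m k" and BA: "?B * ?A = 1\<^sub>m k"
    unfolding mat_diag_diag mat_diag_one[symmetric]
    using assms by (auto intro!: eq_matI simp: mat_diag_def)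
  show ?thesis
  proof (cases "mat_inverse ?A")
    case None
    with mat_inverse(1)[OF mat_diag_dim, of k d undefined] AB BA show ?thesis
      by (auto simp: Units_def ring_mat_def simp del: mat_diag_diag)
  next
    case (Some C)
    with mat_inverse(2)[OF mat_diag_dim] have C: "?A * C = 1\<^sub>m k" "C \<in> carrier_mat k k"
      by auto
    have "C = (?B * ?A) * C" using C by (simp add: BA del: mat_diag_diag)
    also have "\<dots> = ?B * (?A * C)" using assoc_mult_mat[OF mat_diag_dim mat_diag_dim C(2)] .
    also have "\<dots> = ?B" using C by (simp add: right_mult_one_mat[OF mat_diag_dim])
    finally show ?thesis using Some by simp
  qed
qed

lemma mat_diag_mult_vec_nth:
  assumes "l < k" and "dim_vec v = k"
  shows "(mat_diag k d *\<^sub>v v) $ l = d l * v $ l"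
proof -
  have "(mat_diag k d *\<^sub>v v) $ l = (\<Sum>m<k. (if l = m then d m else 0) * v $ m)"
    using assms by (simp add: mat_diag_def scalar_prod_def lessThan_atLeast0)
  also have "\<dots> = (\<Sum>m<k. if m = l then d l * v $ l else 0)"
    by (rule sum.cong) auto
  also have "\<dots> = d l * v $ l"
    using assms by simp
  finally show ?thesis .
qed

definition select_cols :: "'a mat \<Rightarrow> nat list \<Rightarrow> 'a mat" where
  "select_cols X js = mat (dim_row X) (length js) (\<lambda>(i, l). X $$ (i, js ! l))"

lemma select_cols_gram:
  assumes "distinct js" and "set js \<subseteq> {..<dim_col X}"
    and orth: "\<forall>j<dim_col X. \<forall>k<dim_col X. j \<noteq> k \<longrightarrow> ipv (col X j) (col X k) = 0"
  shows "transpose_mat (select_cols X js) * select_cols X js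
           = mat_diag (length js) (\<lambda>l. sqnorm (col X (js ! l)))"
proof (rule eq_matI)
  fix l m assume "l < dim_row (mat_diag (length js) (\<lambda>l. sqnorm (col X (js ! l))))"
    and "m < dim_col (mat_diag (length js) (\<lambda>l. sqnorm (col X (js ! l))))"
  then have lm: "l < length js" "m < length js" by (simp_all add: mat_diag_def)
  then have "js ! l < dim_col X" "js ! m < dim_col X"
    using assms(2) nth_mem by blast+
  then have "(transpose_mat (select_cols X js) * select_cols X js) $$ (l, m)
      = ipv (col X (js ! l)) (col X (js ! m))"
    using lm by (simp add: select_cols_def scalar_prod_def ipv_def lessThan_atLeast0)
  also have "\<dots> = (if l = m then sqnorm (col X (js ! l)) else 0)"
    using orth \<open>js ! l < dim_col X\<close> \<open>js ! m < dim_col X\<close> \<open>distinct js\<close> lm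
    by (auto simp: sqnorm_def nth_eq_iff_index_eq)
  finally show "(transpose_mat (select_cols X js) * select_cols X js) $$ (l, m)
      = mat_diag (length js) (\<lambda>l. sqnorm (col X (js ! l))) $$ (l, m)"
    using lm by (simp add: mat_diag_def)
qed (simp_all add: select_cols_def mat_diag_def)

lemma select_cols_transpose_mult_vec_nth:
  assumes "dim_vec v = dim_row X" and "l < length js"
  shows "(transpose_mat (select_cols X js) *\<^sub>v v) $ l = ipv (col X (js ! l)) v"
  using assms by (simp add: select_cols_def scalar_prod_def ipv_def col_def lessThan_atLeast0)

lemma sqnorm_pos_iff: "0 < sqnorm v \<longleftrightarrow> v \<noteq> 0\<^sub>v (dim_vec v)"
proof -
  have "sqnorm v = (\<Sum>i<dim_vec v. (v $ i)\<^sup>2)"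
    by (simp add: sqnorm_def ipv_def power2_eq_square)
  moreover have "(\<Sum>i<dim_vec v. (v $ i)\<^sup>2) = 0 \<longleftrightarrow> v = 0\<^sub>v (dim_vec v)"
    by (auto simp: sum_nonneg_eq_0_iff vec_eq_iff)
  moreover have "(\<Sum>i<dim_vec v. (v $ i)\<^sup>2) \<ge> 0"
    by (simp add: sum_nonneg)
  ultimately show ?thesis by linarith
qed

lemma sqnorm_nonneg: "sqnorm v \<ge> 0"
  by (simp add: sqnorm_def ipv_def sum_nonneg)

lemma ipv_col: "ipv (col X j) v = (\<Sum>i<dim_row X. X $$ (i, j) * v $ i)"
  by (simp add: ipv_def col_def)

lemma ipv_add_right:
  assumes "dim_vec v = dim_vec u" and "dim_vec w = dim_vec u"
  shows "ipv u (v + w) = ipv u v + ipv u w"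
  using assms by (simp add: ipv_def distrib_left sum.distrib)

lemma ipv_col_mult_mat_vec:
  assumes X: "X \<in> carrier_mat n p" and \<beta>: "\<beta> \<in> carrier_vec p"
    and orth: "\<forall>j<p. \<forall>k<p. j \<noteq> k \<longrightarrow> ipv (col X j) (col X k) = 0" and "j < p"
  shows "ipv (col X j) (X *\<^sub>v \<beta>) = sqnorm (col X j) * \<beta> $ j"
proof -
  have "ipv (col X j) (X *\<^sub>v \<beta>) = (\<Sum>i<n. X $$ (i, j) * (\<Sum>k<p. X $$ (i, k) * \<beta> $ k))"
    using X \<beta> \<open>j < p\<close> by (simp add: ipv_def scalar_prod_def lessThan_atLeast0)
  also have "\<dots> = (\<Sum>k<p. \<beta> $ k * ipv (col X j) (col X k))"
    using X \<open>j < p\<close>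
    by (simp add: ipv_def sum_distrib_left sum_distrib_right sum.swap[of _ "{..<n}"] ac_simps)
  also have "\<dots> = (\<Sum>k<p. if k = j then \<beta> $ j * sqnorm (col X j) else 0)"
    using orth \<open>j < p\<close> by (intro sum.cong) (auto simp: sqnorm_def)
  finally show ?thesis
    using \<open>j < p\<close> by simp
qed

lemma gamma_tilde_nonneg: "gamma_tilde \<sigma>2 z X Y j \<ge> 0"
  by (simp add: gamma_tilde_def gamma_hat_def Let_def)

lemma gamma_tilde_neq_0_iff:
  assumes "\<sigma>2 > 0" and q: "sqnorm (col X j) > 0" and "z \<ge> 0"
  shows "gamma_tilde \<sigma>2 z X Y j \<noteq> 0
           \<longleftrightarrow> \<sigma>2 * sqnorm (col X j) * (1 + z) < (ipv (col X j) Y)\<^sup>2"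
proof -
  define q h where "q = sqnorm (col X j)" and "h = ipv (col X j) Y"
  have "\<sigma>2 * z / q < (h\<^sup>2 - \<sigma>2 * q) / q\<^sup>2 \<longleftrightarrow> \<sigma>2 * z * q < h\<^sup>2 - \<sigma>2 * q"
    using q by (simp add: q_def field_simps power2_eq_square)
  moreover have "\<sigma>2 * q * z \<ge> 0"
    using assms by (simp add: q_def)
  ultimately have "(\<sigma>2 * q < h\<^sup>2 \<and> \<sigma>2 * z / q < (h\<^sup>2 - \<sigma>2 * q) / q\<^sup>2) \<longleftrightarrow> \<sigma>2 * q * (1 + z) < h\<^sup>2"
    by (auto simp: algebra_simps)
  moreover have "gamma_tilde \<sigma>2 z X Y j \<noteq> 0 \<longleftrightarrow> \<sigma>2 * q < h\<^sup>2 \<and> \<sigma>2 * z / q < (h\<^sup>2 - \<sigma>2 * q) / q\<^sup>2"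
    using assms by (auto simp: gamma_tilde_def gamma_hat_def Let_def q_def h_def)
  ultimately show ?thesis by (simp add: q_def h_def)
qed

lemma orthogonal_ridge_solution_nth:
  fixes X :: "real mat"
  assumes "distinct js" and js: "set js \<subseteq> {..<dim_col X}"
    and orth: "\<forall>j<dim_col X. \<forall>k<dim_col X. j \<noteq> k \<longrightarrow> ipv (col X j) (col X k) = 0"
    and "\<sigma>2 > 0" and g: "\<And>l. l < length js \<Longrightarrow> g l > 0"
    and "dim_vec Y = dim_row X" and "l < length js"
  shows "(the (mat_inverse (transpose_mat (select_cols X js) * select_cols X js
             + \<sigma>2 \<cdot>\<^sub>m the (mat_inverse (mat_diag (length js) g))))
          *\<^sub>v (transpose_mat (select_cols X js) *\<^sub>v Y)) $ l
         = ipv (col X (js ! l)) Y / (sqnorm (col X (js ! l)) + \<sigma>2 / g l)"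
proof -
  define k Xg d where "k = length js" and "Xg = select_cols X js"
    and "d l = sqnorm (col X (js ! l)) + \<sigma>2 / g l" for l
  have "the (mat_inverse (mat_diag k g)) = mat_diag k (\<lambda>l. inverse (g l))"
    using g by (simp add: k_def mat_inverse_mat_diag less_imp_neq[symmetric])
  then have "transpose_mat Xg * Xg + \<sigma>2 \<cdot>\<^sub>m the (mat_inverse (mat_diag k g)) = mat_diag k d"
    using select_cols_gram[OF \<open>distinct js\<close> js orth]
    by (auto intro!: eq_matI simp: Xg_def k_def mat_diag_def d_def field_simps)
  moreover have "d l > 0" if "l < k" for l
    using g[of l] that sqnorm_nonneg[of "col X (js ! l)"] \<open>\<sigma>2 > 0\<close>
    by (simp add: d_def k_def add_nonneg_pos)
  ultimately have "the (mat_inverse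
      (transpose_mat Xg * Xg + \<sigma>2 \<cdot>\<^sub>m the (mat_inverse (mat_diag k g))))
      = mat_diag k (\<lambda>l. inverse (d l))"
    by (simp add: mat_inverse_mat_diag less_imp_neq[symmetric])
  moreover have "dim_vec (transpose_mat Xg *\<^sub>v Y) = k"
    by (simp add: Xg_def select_cols_def k_def)
  moreover have "(transpose_mat Xg *\<^sub>v Y) $ l = ipv (col X (js ! l)) Y"
    unfolding Xg_def using assms(6,7) by (rule select_cols_transpose_mult_vec_nth)
  ultimately show ?thesis
    using \<open>l < length js\<close>
    by (simp add: Xg_def k_def d_def mat_diag_mult_vec_nth divide_inverse del: mult_mat_vec)
qed

lemma dim_sbl_estimator [simp]: "dim_vec (sbl_estimator \<sigma>2 z X Y) = dim_col X"
  by (simp add: sbl_estimator_def Let_def)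

lemma sbl_estimator_orthogonal:
  assumes X: "X \<in> carrier_mat n p" and Y: "Y \<in> carrier_vec n" and "\<sigma>2 > 0"
    and orth: "\<forall>j<p. \<forall>k<p. j \<noteq> k \<longrightarrow> ipv (col X j) (col X k) = 0"
  shows "sbl_estimator \<sigma>2 z X Y = Matrix.vec p (\<lambda>j.
           if gamma_tilde \<sigma>2 z X Y j \<noteq> 0
           then ipv (col X j) Y / (sqnorm (col X j) + \<sigma>2 / gamma_tilde \<sigma>2 z X Y j) else 0)"
proof -
  define \<gamma> where "\<gamma> = gamma_tilde \<sigma>2 z X Y"
  define I where "I = {j. j < dim_col X \<and> \<gamma> j \<noteq> 0}"
  define js where "js = sorted_list_of_set I"
  define k where "k = length js"
  define b where "b = the (mat_inverse (transpose_mat (select_cols X js) * select_cols X js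
      + \<sigma>2 \<cdot>\<^sub>m the (mat_inverse (mat_diag k (\<lambda>l. \<gamma> (js ! l))))))
      *\<^sub>v (transpose_mat (select_cols X js) *\<^sub>v Y)"
  have Gbar: "mat k k (\<lambda>(l, m). if l = m then \<gamma> (js ! l) else 0) = mat_diag k (\<lambda>l. \<gamma> (js ! l))"
    by (auto intro!: eq_matI simp: mat_diag_def)
  have est: "sbl_estimator \<sigma>2 z X Y
      = Matrix.vec (dim_col X) (\<lambda>j. if j \<in> I then b $ card {i \<in> I. i < j} else 0)"
    unfolding b_def Gbar[symmetric]
    unfolding sbl_estimator_def Let_def k_def js_def I_def \<gamma>_def select_cols_def ..
  have "finite I" by (simp add: I_def)
  then have js: "distinct js" "set js = I" by (simp_all add: js_def)
  have "b $ card {i \<in> I. i < j} = ipv (col X j) Y / (sqnorm (col X j) + \<sigma>2 / \<gamma> j)"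
    if "j \<in> I" for j
  proof -
    have "card {i \<in> I. i < j} < card I"
      using \<open>finite I\<close> that by (intro psubset_card_mono) auto
    then have "card {i \<in> I. i < j} < length js"
      using js distinct_card[of js] by simp
    moreover have "js ! card {i \<in> I. i < j} = j"
      using nth_sorted_list_of_set_card_less[OF \<open>finite I\<close> that] by (simp add: js_def)
    moreover have "\<gamma> (js ! l) > 0" if "l < length js" for l
      using that js nth_mem[of l js] gamma_tilde_nonneg[of \<sigma>2 z X Y "js ! l"]
      by (auto simp: I_def \<gamma>_def)
    ultimately show ?thesis
      unfolding b_def k_def using js X Y orth \<open>\<sigma>2 > 0\<close>
      by (subst orthogonal_ridge_solution_nth) (auto simp: I_def)
  qed
  then show ?thesis
    using X by (auto intro!: eq_vecI simp: est I_def \<gamma>_def)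
qed

lemma sgn_sbl_estimator:
  assumes X: "X \<in> carrier_mat n p" and Y: "Y \<in> carrier_vec n" and "\<sigma>2 > 0"
    and nz: "\<forall>j<p. col X j \<noteq> 0\<^sub>v n"
    and "\<forall>j<p. \<forall>k<p. j \<noteq> k \<longrightarrow> ipv (col X j) (col X k) = 0"
    and "z \<ge> 0" and "j < p"
  shows "sgn (sbl_estimator \<sigma>2 z X Y $ j)
           = (if \<sigma>2 * sqnorm (col X j) * (1 + z) < (ipv (col X j) Y)\<^sup>2
              then sgn (ipv (col X j) Y) else 0)"
proof -
  define g h q where "g = gamma_tilde \<sigma>2 z X Y j" and "h = ipv (col X j) Y"
    and "q = sqnorm (col X j)"
  have "q > 0"
    using nz X \<open>j < p\<close> by (simp add: q_def sqnorm_pos_iff)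
  have est: "sbl_estimator \<sigma>2 z X Y $ j = (if g \<noteq> 0 then h / (q + \<sigma>2 / g) else 0)"
    using sbl_estimator_orthogonal[OF assms(1-3,5)] \<open>j < p\<close> by (simp add: g_def h_def q_def)
  have "g \<noteq> 0 \<longleftrightarrow> \<sigma>2 * q * (1 + z) < h\<^sup>2"
    using gamma_tilde_neq_0_iff \<open>q > 0\<close> assms by (simp add: g_def h_def q_def)
  moreover have "q + \<sigma>2 / g > 0" if "g \<noteq> 0"
    using that gamma_tilde_nonneg[of \<sigma>2 z X Y j] \<open>q > 0\<close> \<open>\<sigma>2 > 0\<close>
    by (simp add: g_def add_pos_nonneg)
  ultimately show ?thesis
    by (simp add: est sgn_divide h_def q_def)
qed

lemma sign_vec_sbl_estimator_eq_iff:
  assumes X: "X \<in> carrier_mat n p" and "Y \<in> carrier_vec n" and "\<sigma>2 > 0"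
    and "\<forall>j<p. col X j \<noteq> 0\<^sub>v n"
    and "\<forall>j<p. \<forall>k<p. j \<noteq> k \<longrightarrow> ipv (col X j) (col X k) = 0"
    and "z \<ge> 0" and \<beta>: "\<beta> \<in> carrier_vec p"
  shows "sign_vec (sbl_estimator \<sigma>2 z X Y) = sign_vec \<beta>
           \<longleftrightarrow> (\<forall>j<p. (if \<sigma>2 * sqnorm (col X j) * (1 + z) < (ipv (col X j) Y)\<^sup>2
                       then sgn (ipv (col X j) Y) else 0) = sgn (\<beta> $ j))"
  using sgn_sbl_estimator[OF assms(1-6)] X \<beta> by (auto simp: sign_vec_def vec_eq_iff)

lemma threshold_sgn_add_eq:
  fixes u e R :: real
  assumes signal: "u \<noteq> 0 \<Longrightarrow> 4 * R < u\<^sup>2" and noise: "e\<^sup>2 \<le> R"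
  shows "(if R < (u + e)\<^sup>2 then sgn (u + e) else 0) = sgn u"
proof (cases "u = 0")
  case True
  then show ?thesis using noise by simp
next
  case False
  have "\<bar>e\<bar> \<le> sqrt R"
    using noise real_sqrt_le_mono by fastforce
  moreover have "2 * sqrt R < \<bar>u\<bar>"
    using real_sqrt_less_mono[OF signal[OF False]] by (simp add: real_sqrt_mult)
  ultimately have "sqrt R < sqrt ((u + e)\<^sup>2)" and "sgn (u + e) = sgn u"
    by (auto simp: sgn_real_def abs_real_def split: if_splits)
  then show ?thesis
    by (simp only: real_sqrt_less_iff if_True)
qed

lemma indep_vars_PiM_coordinates:
  assumes N: "prob_space N" "sets N = sets borel" and "I \<noteq> {}"
  shows "prob_space.indep_vars (PiM I (\<lambda>_. N)) (\<lambda>_. borel) (\<lambda>i \<omega>. \<omega> i) I"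
proof -
  interpret P: prob_space "PiM I (\<lambda>_. N)"
    using N by (intro prob_space_PiM) auto
  have coord: "(\<lambda>\<omega>. \<omega> i) \<in> measurable (PiM I (\<lambda>_. N)) borel" if "i \<in> I" for i
  proof -
    have "(\<lambda>\<omega>. \<omega> i) \<in> measurable (PiM I (\<lambda>_. N)) N"
      using that by simp
    then show ?thesis
      unfolding measurable_cong_sets[OF refl N(2), symmetric] .
  qed
  have "distr (PiM I (\<lambda>_. N)) (PiM I (\<lambda>_. borel)) (\<lambda>x. \<lambda>i\<in>I. x i)
      = distr (PiM I (\<lambda>_. N)) (PiM I (\<lambda>_. borel)) (\<lambda>x. x)"
    by (rule distr_cong) (auto simp: space_PiM PiE_def extensional_restrict)
  also have "\<dots> = PiM I (\<lambda>_. N)"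
    by (rule distr_id2) (intro sets_PiM_cong, auto simp: N(2))
  also have "\<dots> = PiM I (\<lambda>i. distr (PiM I (\<lambda>_. N)) borel (\<lambda>\<omega>. \<omega> i))"
  proof (rule PiM_cong[OF refl])
    fix i assume "i \<in> I"
    have "distr (PiM I (\<lambda>_. N)) borel (\<lambda>\<omega>. \<omega> i) = distr (PiM I (\<lambda>_. N)) N (\<lambda>\<omega>. \<omega> i)"
      by (rule distr_cong) (auto simp: N(2))
    also have "\<dots> = N"
      using N \<open>i \<in> I\<close> by (intro distr_PiM_component) auto
    finally show "N = distr (PiM I (\<lambda>_. N)) borel (\<lambda>\<omega>. \<omega> i)" by simp
  qed
  finally show ?thesis
    using coord by (subst P.indep_vars_iff_distr_eq_PiM'[OF \<open>I \<noteq> {}\<close>]) auto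
qed

lemma distributed_PiM_normal_coordinate:
  assumes "\<sigma> > 0" and "i \<in> I"
  shows "distributed (PiM I (\<lambda>_. density lborel (normal_density 0 \<sigma>))) lborel (\<lambda>\<omega>. \<omega> i)
           (normal_density 0 \<sigma>)"
proof -
  let ?N = "density lborel (\<lambda>x. ennreal (normal_density 0 \<sigma> x))"
  have "prob_space ?N"
    using \<open>\<sigma> > 0\<close> by (rule prob_space_normal_density)
  have "distr (PiM I (\<lambda>_. ?N)) lborel (\<lambda>\<omega>. \<omega> i) = distr (PiM I (\<lambda>_. ?N)) ?N (\<lambda>\<omega>. \<omega> i)"
    by (rule distr_cong) auto
  also have "\<dots> = ?N"
    using \<open>prob_space ?N\<close> \<open>i \<in> I\<close> by (intro distr_PiM_component) auto
  finally have "distr (PiM I (\<lambda>_. ?N)) lborel (\<lambda>\<omega>. \<omega> i) = ?N" .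
  moreover have "(\<lambda>\<omega>. \<omega> i) \<in> measurable (PiM I (\<lambda>_. ?N)) lborel"
    using \<open>i \<in> I\<close> measurable_cong_sets[OF refl sets_density[of lborel]] by auto
  ultimately show ?thesis
    by (simp add: distributed_def)
qed

lemma distributed_normal_lincomb:
  fixes a :: "nat \<Rightarrow> real"
  assumes "\<sigma> > 0" and "\<exists>i<n. a i \<noteq> 0"
  shows "distributed (PiM {..<n} (\<lambda>_. density lborel (normal_density 0 \<sigma>))) lborel
           (\<lambda>\<omega>. \<Sum>i<n. a i * \<omega> i) (normal_density 0 (\<sigma> * sqrt (\<Sum>i<n. (a i)\<^sup>2)))"
proof -
  let ?N = "density lborel (\<lambda>x. ennreal (normal_density 0 \<sigma> x))"
  let ?P = "PiM {..<n} (\<lambda>_. ?N)"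
  have N: "prob_space ?N"
    using \<open>\<sigma> > 0\<close> by (rule prob_space_normal_density)
  interpret P: prob_space ?P
    using N by (intro prob_space_PiM) auto
  define J where "J = {i. i < n \<and> a i \<noteq> 0}"
  have J: "finite J" "J \<noteq> {}" "J \<subseteq> {..<n}"
    using assms(2) by (auto simp: J_def)
  have "P.indep_vars (\<lambda>_. borel) (\<lambda>i \<omega>. \<omega> i) {..<n}"
    using assms(2) by (intro indep_vars_PiM_coordinates[OF N]) auto
  then have "P.indep_vars (\<lambda>_. borel) (\<lambda>i \<omega>. a i * \<omega> i) {..<n}"
    using P.indep_vars_compose2[of _ _ _ "\<lambda>i x. a i * x" "\<lambda>_. borel"] by simp
  then have ind: "P.indep_vars (\<lambda>_. borel) (\<lambda>i \<omega>. a i * \<omega> i) J"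
    using J(3) by (rule P.indep_vars_subset)
  have dist: "distributed ?P lborel (\<lambda>\<omega>. a i * \<omega> i) (normal_density 0 (\<bar>a i\<bar> * \<sigma>))"
    if "i \<in> J" for i
  proof -
    have "distributed ?P lborel (\<lambda>\<omega>. \<omega> i) (normal_density 0 \<sigma>)"
      using that J(3) \<open>\<sigma> > 0\<close> by (intro distributed_PiM_normal_coordinate) auto
    from P.normal_density_affine[OF this \<open>\<sigma> > 0\<close>, of "a i" 0] show ?thesis
      using that by (simp add: J_def)
  qed
  have pos: "0 < \<bar>a i\<bar> * \<sigma>" if "i \<in> J" for i
    using that \<open>\<sigma> > 0\<close> by (simp add: J_def)
  from P.sum_indep_normal[OF J(1,2) ind pos dist]
  have "distributed ?P lborel (\<lambda>\<omega>. \<Sum>i\<in>J. a i * \<omega> i)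
      (normal_density 0 (sqrt (\<Sum>i\<in>J. (\<bar>a i\<bar> * \<sigma>)\<^sup>2)))"
    by simp
  moreover have "(\<lambda>\<omega>. \<Sum>i\<in>J. a i * \<omega> i) = (\<lambda>\<omega>. \<Sum>i<n. a i * \<omega> i)"
    by (intro ext sum.mono_neutral_left) (auto simp: J_def)
  moreover have "(\<Sum>i\<in>J. (\<bar>a i\<bar> * \<sigma>)\<^sup>2) = \<sigma>\<^sup>2 * (\<Sum>i<n. (a i)\<^sup>2)"
    by (subst sum.mono_neutral_left[of "{..<n}" J])
       (auto simp: J_def sum_distrib_left power_mult_distrib mult.commute)
  ultimately show ?thesis
    using \<open>\<sigma> > 0\<close> by (simp add: real_sqrt_mult)
qed

lemma (in prob_space) normal_upper_tail:
  assumes Z: "distributed M lborel Z (normal_density 0 s)" and "s > 0" and "T > 0"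
  shows "prob {\<omega> \<in> space M. T < Z \<omega>} \<le> s / (T * sqrt (2 * pi)) * exp (- T\<^sup>2 / (2 * s\<^sup>2))"
proof -
  define F where "F x = - (s\<^sup>2 / T) * normal_density 0 s x" for x
  have "emeasure M {\<omega> \<in> space M. T < Z \<omega>}
      = (\<integral>\<^sup>+x. ennreal (normal_density 0 s x) * indicator {T<..} x \<partial>lborel)"
    using distributed_emeasure[OF Z, of "{T<..}"] by (simp add: vimage_def Int_def conj_commute)
  also have "\<dots> \<le> (\<integral>\<^sup>+x. ennreal (x / T * normal_density 0 s x) * indicator {T..} x \<partial>lborel)"
    using \<open>T > 0\<close>
    by (intro nn_integral_mono)
       (auto simp: indicator_def intro!: ennreal_leI mult_right_mono[of 1 "_ / T", simplified])
  also have "\<dots> = ennreal (0 - F T)"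
  proof (rule nn_integral_FTC_atLeast)
    show "DERIV F x :> x / T * normal_density 0 s x" for x
      unfolding F_def normal_density_def using \<open>s > 0\<close> \<open>T > 0\<close>
      by (auto intro!: derivative_eq_intros simp: field_simps power2_eq_square)
    show "(F \<longlongrightarrow> 0) at_top"
      unfolding F_def normal_density_def using \<open>s > 0\<close> by real_asymp
  qed (use \<open>T > 0\<close> in auto)
  also have "0 - F T = s / (T * sqrt (2 * pi)) * exp (- T\<^sup>2 / (2 * s\<^sup>2))"
    unfolding F_def normal_density_def using \<open>s > 0\<close> \<open>T > 0\<close>
    by (simp add: real_sqrt_mult field_simps power2_eq_square)
  finally show ?thesis
    using \<open>s > 0\<close> \<open>T > 0\<close> by (simp add: emeasure_eq_measure ennreal_le_iff)
qed

lemma (in prob_space) normal_square_tail: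
  assumes Z: "distributed M lborel Z (normal_density 0 s)" and "s > 0" and "w \<ge> 1"
  shows "prob {\<omega> \<in> space M. s\<^sup>2 * w < (Z \<omega>)\<^sup>2} \<le> exp (- w / 2)"
proof -
  define T where "T = s * sqrt w"
  have "T > 0"
    using \<open>s > 0\<close> \<open>w \<ge> 1\<close> by (simp add: T_def)
  have one_sided: "prob {\<omega> \<in> space M. T < Y \<omega>} \<le> exp (- w / 2) / 2"
    if "distributed M lborel Y (normal_density 0 s)" for Y
  proof -
    have "2 \<le> sqrt (2 * pi)"
      using pi_gt3 by (intro real_le_rsqrt) simp
    moreover have "1 \<le> sqrt w"
      using \<open>w \<ge> 1\<close> by simp
    ultimately have "2 \<le> sqrt w * sqrt (2 * pi)"
      using mult_mono[of 1 "sqrt w" 2 "sqrt (2 * pi)"] by simp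
    then have "exp (- w / 2) / (sqrt w * sqrt (2 * pi)) \<le> exp (- w / 2) / 2"
      by (intro divide_left_mono) auto
    moreover have "s / (T * sqrt (2 * pi)) * exp (- T\<^sup>2 / (2 * s\<^sup>2))
        = exp (- w / 2) / (sqrt w * sqrt (2 * pi))"
      using \<open>s > 0\<close> \<open>w \<ge> 1\<close> by (simp add: T_def power_mult_distrib field_simps)
    ultimately show ?thesis
      using normal_upper_tail[OF that \<open>s > 0\<close> \<open>T > 0\<close>] by linarith
  qed
  have "distributed M lborel (\<lambda>\<omega>. - Z \<omega>) (normal_density 0 s)"
    using normal_density_affine[OF Z \<open>s > 0\<close>, of "-1" 0] by simp
  then have "prob {\<omega> \<in> space M. T < Z \<omega>} + prob {\<omega> \<in> space M. T < - Z \<omega>} \<le> exp (- w / 2)"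
    using one_sided[OF Z] one_sided by fastforce
  moreover have "T\<^sup>2 < x\<^sup>2 \<longleftrightarrow> T < x \<or> T < - x" for x :: real
  proof -
    have "T\<^sup>2 < x\<^sup>2 \<longleftrightarrow> \<bar>T\<bar> < \<bar>x\<bar>"
      by (metis abs_le_square_iff not_le)
    then show ?thesis
      using \<open>T > 0\<close> by auto
  qed
  then have "{\<omega> \<in> space M. s\<^sup>2 * w < (Z \<omega>)\<^sup>2}
      = {\<omega> \<in> space M. T < Z \<omega>} \<union> {\<omega> \<in> space M. T < - Z \<omega>}"
    using \<open>w \<ge> 1\<close> by (auto simp: T_def power_mult_distrib)
  moreover have "Z \<in> borel_measurable M"
    using distributed_measurable[OF Z] by simp
  ultimately show ?thesis
    using measure_Un_le[of "{\<omega> \<in> space M. T < Z \<omega>}" M "{\<omega> \<in> space M. T < - Z \<omega>}"]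
    by simp
qed

lemma prob_space_noise_measure: "\<sigma>2 > 0 \<Longrightarrow> prob_space (noise_measure n \<sigma>2)"
  unfolding noise_measure_def by (intro prob_space_PiM prob_space_normal_density) auto

lemma noise_lincomb_square_tail:
  fixes a :: "nat \<Rightarrow> real"
  assumes "\<sigma>2 > 0" and "\<exists>i<n. a i \<noteq> 0" and "w \<ge> 1"
  shows "measure (noise_measure n \<sigma>2) {\<omega> \<in> space (noise_measure n \<sigma>2).
           \<sigma>2 * (\<Sum>i<n. (a i)\<^sup>2) * w < (\<Sum>i<n. a i * \<omega> i)\<^sup>2} \<le> exp (- w / 2)"
proof -
  interpret prob_space "noise_measure n \<sigma>2"
    using \<open>\<sigma>2 > 0\<close> by (rule prob_space_noise_measure)
  define s where "s = sqrt \<sigma>2 * sqrt (\<Sum>i<n. (a i)\<^sup>2)"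
  have "(\<Sum>i<n. (a i)\<^sup>2) > 0"
    using assms(2) by (metis finite_lessThan lessThan_iff sum_pos2 zero_le_power2 zero_less_power2)
  then have "s > 0" and "s\<^sup>2 = \<sigma>2 * (\<Sum>i<n. (a i)\<^sup>2)"
    using \<open>\<sigma>2 > 0\<close> by (simp_all add: s_def power_mult_distrib)
  moreover have "distributed (noise_measure n \<sigma>2) lborel (\<lambda>\<omega>. \<Sum>i<n. a i * \<omega> i) (normal_density 0 s)"
    unfolding noise_measure_def s_def using assms(1,2) by (intro distributed_normal_lincomb) auto
  ultimately show ?thesis
    using normal_square_tail[of "\<lambda>\<omega>. \<Sum>i<n. a i * \<omega> i" s w] \<open>w \<ge> 1\<close> by simp
qed

lemma prob_noise_exceeds_threshold_le:
  assumes X: "X \<in> carrier_mat n p" and "\<sigma>2 > 0" and nz: "\<forall>j<p. col X j \<noteq> 0\<^sub>v n"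
    and "z \<ge> 0"
  shows "measure (noise_measure n \<sigma>2) {\<epsilon> \<in> space (noise_measure n \<sigma>2).
           \<exists>j<p. \<sigma>2 * sqnorm (col X j) * (1 + z) < (\<Sum>i<n. X $$ (i, j) * \<epsilon> i)\<^sup>2}
         \<le> real p * exp (- (1 + z) / 2)"
proof -
  let ?P = "noise_measure n \<sigma>2"
  interpret P: prob_space ?P
    using \<open>\<sigma>2 > 0\<close> by (rule prob_space_noise_measure)
  define bad where "bad j = {\<epsilon> \<in> space ?P.
      \<sigma>2 * sqnorm (col X j) * (1 + z) < (\<Sum>i<n. X $$ (i, j) * \<epsilon> i)\<^sup>2}" for j
  have "bad j \<in> P.events" for j
    unfolding bad_def noise_measure_def by measurable
  have bad_le: "P.prob (bad j) \<le> exp (- (1 + z) / 2)" if "j < p" for j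
  proof -
    have "\<exists>i<n. X $$ (i, j) \<noteq> 0"
      using nz X that by (auto simp: vec_eq_iff)
    moreover have "sqnorm (col X j) = (\<Sum>i<n. (X $$ (i, j))\<^sup>2)"
      using X that by (simp add: sqnorm_def ipv_def power2_eq_square)
    ultimately show ?thesis
      using noise_lincomb_square_tail[OF \<open>\<sigma>2 > 0\<close>, of n "\<lambda>i. X $$ (i, j)" "1 + z"] \<open>z \<ge> 0\<close>
      by (simp add: bad_def)
  qed
  have "{\<epsilon> \<in> space ?P. \<exists>j<p. \<sigma>2 * sqnorm (col X j) * (1 + z)
      < (\<Sum>i<n. X $$ (i, j) * \<epsilon> i)\<^sup>2} = (\<Union>j<p. bad j)"
    by (auto simp: bad_def)
  also have "P.prob \<dots> \<le> (\<Sum>j<p. P.prob (bad j))"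
    using \<open>\<And>j. bad j \<in> P.events\<close> by (intro P.finite_measure_subadditive_finite) auto
  also have "\<dots> \<le> (\<Sum>j<p. exp (- (1 + z) / 2))"
    by (intro sum_mono bad_le) simp
  finally show ?thesis by simp
qed

lemma sign_vec_sbl_estimator_noisy_eq_iff:
  assumes X: "X \<in> carrier_mat n p" and \<beta>: "\<beta> \<in> carrier_vec p" and "\<sigma>2 > 0"
    and nz: "\<forall>j<p. col X j \<noteq> 0\<^sub>v n"
    and orth: "\<forall>j<p. \<forall>k<p. j \<noteq> k \<longrightarrow> ipv (col X j) (col X k) = 0" and "z \<ge> 0"
  shows "sign_vec (sbl_estimator \<sigma>2 z X (X *\<^sub>v \<beta> + Matrix.vec n \<epsilon>)) = sign_vec \<beta>
    \<longleftrightarrow> (\<forall>j<p. let u = sqnorm (col X j) * \<beta> $ j; e = (\<Sum>i<n. X $$ (i, j) * \<epsilon> i) in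
           (if \<sigma>2 * sqnorm (col X j) * (1 + z) < (u + e)\<^sup>2 then sgn (u + e) else 0) = sgn u)"
proof -
  have "ipv (col X j) (X *\<^sub>v \<beta> + Matrix.vec n \<epsilon>)
      = sqnorm (col X j) * \<beta> $ j + (\<Sum>i<n. X $$ (i, j) * \<epsilon> i)" if "j < p" for j
    using X \<beta> orth that
    by (simp add: ipv_add_right ipv_col_mult_mat_vec ipv_col[of X j "Matrix.vec n \<epsilon>"])
  moreover have "sgn (sqnorm (col X j) * \<beta> $ j) = sgn (\<beta> $ j)" if "j < p" for j
    using nz X that by (simp add: sgn_mult sqnorm_pos_iff)
  moreover have "X *\<^sub>v \<beta> + Matrix.vec n \<epsilon> \<in> carrier_vec n"
    using X \<beta> by (intro add_carrier_vec mult_mat_vec_carrier) auto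
  ultimately show ?thesis
    using sign_vec_sbl_estimator_eq_iff[OF X _ \<open>\<sigma>2 > 0\<close> nz orth \<open>z \<ge> 0\<close> \<beta>]
    by (simp add: Let_def)
qed

theorem sbl_sign_recovery_prob:
  assumes X: "X \<in> carrier_mat n p" and \<beta>: "\<beta> \<in> carrier_vec p" and "\<sigma>2 > 0"
    and nz: "\<forall>j<p. col X j \<noteq> 0\<^sub>v n"
    and orth: "\<forall>j<p. \<forall>k<p. j \<noteq> k \<longrightarrow> ipv (col X j) (col X k) = 0" and "z \<ge> 0"
    and signal: "\<And>j. j < p \<Longrightarrow> \<beta> $ j \<noteq> 0 \<Longrightarrow> 4 * \<sigma>2 * (1 + z) < sqnorm (col X j) * (\<beta> $ j)\<^sup>2"
  shows "measure (noise_measure n \<sigma>2) {\<epsilon> \<in> space (noise_measure n \<sigma>2).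
           sign_vec (sbl_estimator \<sigma>2 z X (X *\<^sub>v \<beta> + Matrix.vec n \<epsilon>)) = sign_vec \<beta>}
         \<ge> 1 - real p * exp (- (1 + z) / 2)"
proof -
  let ?P = "noise_measure n \<sigma>2"
  interpret P: prob_space ?P
    using \<open>\<sigma>2 > 0\<close> by (rule prob_space_noise_measure)
  define R where "R j = \<sigma>2 * sqnorm (col X j) * (1 + z)" for j
  define u where "u j = sqnorm (col X j) * \<beta> $ j" for j
  define e where "e j \<epsilon> = (\<Sum>i<n. X $$ (i, j) * \<epsilon> i)" for j \<epsilon>
  define recovered where "recovered = {\<epsilon> \<in> space ?P. \<forall>j<p.
      (if R j < (u j + e j \<epsilon>)\<^sup>2 then sgn (u j + e j \<epsilon>) else 0) = sgn (u j)}"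
  define noisy where "noisy = {\<epsilon> \<in> space ?P. \<exists>j<p. R j < (e j \<epsilon>)\<^sup>2}"
  have "4 * R j < (u j)\<^sup>2" if "j < p" "u j \<noteq> 0" for j
  proof -
    have "sqnorm (col X j) > 0"
      using nz X \<open>j < p\<close> by (simp add: sqnorm_pos_iff)
    from mult_strict_left_mono[OF signal this] show ?thesis
      using that by (simp add: R_def u_def power2_eq_square algebra_simps)
  qed
  then have "space ?P - noisy \<subseteq> recovered"
    unfolding recovered_def noisy_def
    by (intro subsetI CollectI conjI allI impI threshold_sgn_add_eq) (auto simp: not_less dest: leD)
  moreover have "recovered \<in> P.events" and "noisy \<in> P.events"
    unfolding recovered_def noisy_def noise_measure_def e_def by measurable
  moreover have "P.prob noisy \<le> real p * exp (- (1 + z) / 2)"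
    using prob_noise_exceeds_threshold_le[OF X \<open>\<sigma>2 > 0\<close> nz \<open>z \<ge> 0\<close>]
    by (simp add: noisy_def R_def e_def)
  ultimately have "P.prob recovered \<ge> 1 - real p * exp (- (1 + z) / 2)"
    using P.finite_measure_mono P.prob_compl by (smt (verit))
  moreover have "{\<epsilon> \<in> space ?P.
      sign_vec (sbl_estimator \<sigma>2 z X (X *\<^sub>v \<beta> + Matrix.vec n \<epsilon>)) = sign_vec \<beta>} = recovered"
    using sign_vec_sbl_estimator_noisy_eq_iff[OF X \<beta> \<open>\<sigma>2 > 0\<close> nz orth \<open>z \<ge> 0\<close>]
    by (simp add: recovered_def R_def u_def e_def Let_def)
  ultimately show ?thesis
    by simp
qed

lemma signal_strength_of_beta_min:
  fixes q b \<sigma>2 c0 c :: real and n s p :: nat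
  assumes "c > 0" and "c \<le> q / n" and "n > 0" and "\<sigma>2 > 0" and "c0 \<ge> 0"
    and "s \<ge> 1" and "ln p \<ge> 1"
    and beta_min: "sqrt (4 * (2 + c0) / c * \<sigma>2 * s * ln p / n) < \<bar>b\<bar>"
  shows "4 * \<sigma>2 * (1 + c0 * ln p) < q * b\<^sup>2"
proof -
  define K where "K = 4 * (2 + c0) / c * \<sigma>2 * s * ln p / n"
  have "K \<ge> 0"
    using assms by (simp add: K_def)
  then have "K < b\<^sup>2"
    using beta_min by (metis K_def real_sqrt_abs real_sqrt_less_iff)
  then have "c * n * K < c * n * b\<^sup>2"
    using assms by simp
  also have "\<dots> \<le> q * b\<^sup>2"
    using assms by (intro mult_right_mono) (simp_all add: field_simps)
  also have "c * n * K = 4 * \<sigma>2 * ((2 + c0) * (s * ln p))"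
    using assms by (simp add: K_def field_simps)
  finally have "4 * \<sigma>2 * ((2 + c0) * (s * ln p)) < q * b\<^sup>2" .
  moreover have "1 + c0 * ln p \<le> (2 + c0) * (s * ln p)"
  proof -
    have "ln p \<le> s * ln p" and "1 \<le> s * ln p"
      using assms by (simp, metis mult_mono' mult_1 of_nat_1 of_nat_mono zero_le_one)
    moreover from this(1) have "c0 * ln p \<le> c0 * (s * ln p)"
      using \<open>c0 \<ge> 0\<close> by (rule mult_left_mono)
    ultimately show ?thesis
      by (simp add: distrib_right)
  qed
  then have "4 * \<sigma>2 * (1 + c0 * ln p) \<le> 4 * \<sigma>2 * ((2 + c0) * (s * ln p))"
    using \<open>\<sigma>2 > 0\<close> by (intro mult_left_mono) auto
  ultimately show ?thesis
    by linarith
qed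

lemma mult_exp_neg_half_log_le_powr:
  fixes x c0 :: real
  assumes "x > 0"
  shows "x * exp (- (1 + c0 * ln x) / 2) \<le> x powr (- (c0 / 2 - 1))"
proof -
  have "x * exp (- (1 + c0 * ln x) / 2) \<le> x * exp (- (c0 * ln x) / 2)"
    using \<open>x > 0\<close> by (intro mult_left_mono) auto
  also have "exp (- (c0 * ln x) / 2) = x powr (- c0 / 2)"
    using \<open>x > 0\<close> by (simp add: powr_def)
  also have "x * x powr (- c0 / 2) = x powr (1 + - c0 / 2)"
    using \<open>x > 0\<close> unfolding powr_add by simp
  finally show ?thesis by simp
qed

theorem corollary1:
  fixes n p :: nat and X :: "real mat" and \<beta> :: "real Matrix.vec" and \<sigma>2 c0 :: real
    and s :: nat and z c M :: real
  assumes X_dim: "X \<in> carrier_mat n p"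
    and beta_dim: "\<beta> \<in> carrier_vec p"
    and sigma_pos: "\<sigma>2 > 0"
    and cols_nonzero: "\<forall>j<p. col X j \<noteq> 0\<^sub>v n"
    and cols_orth: "\<forall>j<p. \<forall>k<p. j \<noteq> k \<longrightarrow> ipv (col X j) (col X k) = 0"
    and s_def: "s = card {j. j < p \<and> \<beta> $ j \<noteq> 0}"
    and log_s: "ln (real s) \<ge> 1"
    and c0: "c0 > 2"
    and z_def: "z = c0 * ln (real p)"
    and c_def: "c = Min ((\<lambda>j. sqnorm (col X j) / real n) ` {..<p})"
    and M_def: "M = 4 * (2 + c0) / c"
    and beta_min: "Min ((\<lambda>j. \<bar>\<beta> $ j\<bar>) ` {j. j < p \<and> \<beta> $ j \<noteq> 0})
                     > sqrt (M * \<sigma>2 * real s * ln (real p) / real n)"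
  shows "measure (noise_measure n \<sigma>2)
           {\<epsilon> \<in> space (noise_measure n \<sigma>2).
              sign_vec (sbl_estimator \<sigma>2 z X (X *\<^sub>v \<beta> + Matrix.vec n \<epsilon>)) = sign_vec \<beta>}
         \<ge> 1 - real p powr (- (c0 * real s / 8)) - exp (- real s) - real p powr (- (c0 / 2 - 1))"
proof -
  have "s \<ge> 1"
    using log_s by (cases s) auto
  moreover have "s \<le> p"
    unfolding s_def using card_mono[of "{..<p}" "{j. j < p \<and> \<beta> $ j \<noteq> 0}"] by auto
  ultimately have "p > 0" and "ln p \<ge> 1"
    using log_s ln_le_cancel_iff[of s p] by (simp, linarith)
  have "n > 0"
    using cols_nonzero X_dim \<open>p > 0\<close> by (auto simp: vec_eq_iff)
  have "c > 0"
    unfolding c_def using \<open>p > 0\<close> \<open>n > 0\<close> cols_nonzero X_dim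
    by (subst Min_gr_iff) (auto simp: sqnorm_pos_iff)
  have "4 * \<sigma>2 * (1 + z) < sqnorm (col X j) * (\<beta> $ j)\<^sup>2" if "j < p" "\<beta> $ j \<noteq> 0" for j
    unfolding z_def
  proof (rule signal_strength_of_beta_min)
    show "c \<le> sqnorm (col X j) / n"
      unfolding c_def using that by (intro Min_le) auto
    have "Min ((\<lambda>j. \<bar>\<beta> $ j\<bar>) ` {j. j < p \<and> \<beta> $ j \<noteq> 0}) \<le> \<bar>\<beta> $ j\<bar>"
      using that by (intro Min_le) auto
    then show "sqrt (4 * (2 + c0) / c * \<sigma>2 * s * ln p / n) < \<bar>\<beta> $ j\<bar>"
      using beta_min by (simp add: M_def)
  qed (use \<open>c > 0\<close> \<open>n > 0\<close> sigma_pos c0 \<open>s \<ge> 1\<close> \<open>ln p \<ge> 1\<close> in auto)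
  then have "measure (noise_measure n \<sigma>2) {\<epsilon> \<in> space (noise_measure n \<sigma>2).
      sign_vec (sbl_estimator \<sigma>2 z X (X *\<^sub>v \<beta> + Matrix.vec n \<epsilon>)) = sign_vec \<beta>}
      \<ge> 1 - real p * exp (- (1 + z) / 2)"
    using \<open>ln p \<ge> 1\<close> c0 z_def
    by (intro sbl_sign_recovery_prob[OF X_dim beta_dim sigma_pos cols_nonzero cols_orth]) auto
  moreover have "real p * exp (- (1 + z) / 2) \<le> real p powr (- (c0 / 2 - 1))"
    using mult_exp_neg_half_log_le_powr[of p c0] \<open>p > 0\<close> z_def by simp
  ultimately show ?thesis
    by (smt (verit) exp_ge_zero powr_ge_zero)
qed

end
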